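(* Assume the uncertain system defined by the interconnection of the augmented LTV system $G_a$ and the set of causal uncertainties $\mathbf{\Delta}$ is well-posed. Furthermore, assume each $\Delta \in \mathbf{\Delta}$ satisfies the time-domain IQCs defined by $\{ M_i \}_{i=1}^{m}\subset \mathbb{S}^{n_v+n_w}$. If there exist non-negative scalars $\{\lambda_i\}_{i=1}^m$ and a differentiable function $P:[0,T]\to \mathbb{S}^{n_x+1}$ such that $P(T)\succeq 0$ and, for all $t\in[0,T]$, \[ \begin{bmatrix} \dot{P} + A_a^\top P + P A_a & P B_a \\ B_a^\top P & 0 \end{bmatrix} + \begin{bmatrix} C_{e,a} & D_{ew} \end{bmatrix}^\top \begin{bmatrix} C_{e,a} & D_{ew} \end{bmatrix} + \sum_{i=1}^m \lambda_i \begin{bmatrix} C_{v,a} & D_{vw} \\ 0 & I \end{bmatrix}^\top M_i \begin{bmatrix} C_{v,a} & D_{vw} \\ 0 & I \end{bmatrix} \prec 0, \] then \[ \max_{\Delta \in \mathbf{\Delta}} \|\delta_e\|_{2,[0,T]} \le \left( \begin{bmatrix} 0\\ 1\end{bmatrix}^\top P(0) \begin{bmatrix} 0\\ 1 \end{bmatrix} \right)^{1/2}. \]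
   Context: Finite horizon $T<\infty$. The augmented LTV system $G_a$ with state $x_a(t)\in\mathbb{R}^{n_x+1}$ is $\dot{x}_a = A_a(t) x_a + B_a(t) w$, $v = C_{v,a}(t) x_a + D_{vw}(t) w$, $\delta_e = C_{e,a}(t) x_a + D_{ew}(t) w$, $x_a(0)=\begin{bmatrix}0\\1\end{bmatrix}$, where $A_a=\begin{bmatrix} A & 0\\ 0 & 0\end{bmatrix}$, $B_a=\begin{bmatrix} B\\0\end{bmatrix}$, $C_{v,a}=\begin{bmatrix} C_v & \bar v\end{bmatrix}$, $C_{e,a}=\begin{bmatrix} C_e & 0\end{bmatrix}$, with $(A,B,C_v,C_e,D_{vw},D_{ew})$ the time-varying matrices of the linearization of a nonlinear system along a nominal trajectory and $\bar v$ the nominal value of the signal $v$. The uncertainty is a causal operator $\Delta:\mathcal{L}_2^{n_v}[0,T]\to\mathcal{L}_2^{n_w}[0,T]$, $w=\Delta(v)$, in a set $\mathbf{\Delta}$. Well-posed means: for each $\Delta\in\mathbf{\Delta}$ there exist unique solutions $(x_a,v,w,\delta_e)$ in $\mathcal{L}_2[0,T]$ of the system equations with $x_a(0)=\begin{bmatrix}0\\1\end{bmatrix}$ and $w=\Delta(v)$. $\Delta$ satisfies the time-domain IQC defined by $M\in\mathbb{S}^{n_v+n_w}$ if $\int_0^T \begin{bmatrix} v\\ w\end{bmatrix}^\top M \begin{bmatrix} v\\ w\end{bmatrix} dt \ge 0$ for all $v\in\mathcal{L}_2^{n_v}[0,T]$ and $w=\Delta(v)$. $\|v\|_{2,[0,T]}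 = (\int_0^T v^\top v\,dt)^{1/2}$. *)

theory Defs
  imports "HOL-Analysis.Analysis"
begin

text \<open>Vectors are real^'n, matrices real^'c^'r (r rows, c columns).
  Block structure is encoded with sum index types: the vector [x; y] has index
  type 'a + 'b.  The augmented state space R^(n_x+1) uses index type 'nx + unit.\<close>

definition sym_mat :: "real^'n^'n \<Rightarrow> bool" where
  "sym_mat M \<longleftrightarrow> transpose M = M"

definition neg_def :: "real^'n^'n \<Rightarrow> bool" where
  "neg_def M \<longleftrightarrow> (\<forall>z. z \<noteq> 0 \<longrightarrow> z \<bullet> (M *v z) < 0)"

definition psd :: "real^'n^'n \<Rightarrow> bool" where
  "psd M \<longleftrightarrow> (\<forall>z. 0 \<le> z \<bullet> (M *v z))"

definition vcat :: "real^'a \<Rightarrow> real^'b \<Rightarrow> real^('a + 'b)" where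
  "vcat x y = (\<chi> i. case i of Inl a \<Rightarrow> x $ a | Inr b \<Rightarrow> y $ b)"

definition blk :: "real^'a^'r \<Rightarrow> real^'b^'r \<Rightarrow> real^'a^'s \<Rightarrow> real^'b^'s
                    \<Rightarrow> real^('a + 'b)^('r + 's)" where
  "blk A B C D = (\<chi> i j. case i of
       Inl r \<Rightarrow> (case j of Inl a \<Rightarrow> A $ r $ a | Inr b \<Rightarrow> B $ r $ b)
     | Inr s \<Rightarrow> (case j of Inl a \<Rightarrow> C $ s $ a | Inr b \<Rightarrow> D $ s $ b))"

definition hcat :: "real^'a^'r \<Rightarrow> real^'b^'r \<Rightarrow> real^('a + 'b)^'r" where
  "hcat A B = (\<chi> r j. case j of Inl a \<Rightarrow> A $ r $ a | Inr b \<Rightarrow> B $ r $ b)"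

definition vstack :: "real^'c^'r \<Rightarrow> real^'c^'s \<Rightarrow> real^'c^('r + 's)" where
  "vstack A B = (\<chi> i. case i of Inl r \<Rightarrow> A $ r | Inr s \<Rightarrow> B $ s)"

definition col :: "real^'r \<Rightarrow> real^unit^'r" where
  "col v = (\<chi> i j. v $ i)"

definition A_aug :: "real^'nx^'nx \<Rightarrow> real^('nx + unit)^('nx + unit)" where
  "A_aug A = blk A 0 0 0"

definition B_aug :: "real^'nw^'nx \<Rightarrow> real^'nw^('nx + unit)" where
  "B_aug B = vstack B 0"

definition Cv_aug :: "real^'nx^'nv \<Rightarrow> real^'nv \<Rightarrow> real^('nx + unit)^'nv" where
  "Cv_aug Cv vbar = hcat Cv (col vbar)"

definition Ce_aug :: "real^'nx^'ne \<Rightarrow> real^('nx + unit)^'ne" where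
  "Ce_aug Ce = hcat Ce 0"

definition x0_aug :: "real^('nx::finite + unit)" where
  "x0_aug = vcat 0 (\<chi> _. 1)"

definition L2 :: "real \<Rightarrow> (real \<Rightarrow> real^'n) \<Rightarrow> bool" where
  "L2 T f \<longleftrightarrow> f measurable_on {0..T} \<and> (\<lambda>t. (norm (f t))\<^sup>2) integrable_on {0..T}"

definition L2_norm :: "real \<Rightarrow> (real \<Rightarrow> real^'n) \<Rightarrow> real" where
  "L2_norm T f = sqrt (integral {0..T} (\<lambda>t. (norm (f t))\<^sup>2))"

text \<open>Equality as elements of L2[0,T] (i.e. almost everywhere).\<close>
definition L2_eq :: "real \<Rightarrow> (real \<Rightarrow> real^'n) \<Rightarrow> (real \<Rightarrow> real^'n) \<Rightarrow> bool" where
  "L2_eq T f g \<longleftrightarrow> integral {0..T} (\<lambda>t. (norm (f t - g t))\<^sup>2) = 0"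

definition causal_op :: "real \<Rightarrow> ((real \<Rightarrow> real^'nv) \<Rightarrow> (real \<Rightarrow> real^'nw)) \<Rightarrow> bool" where
  "causal_op T D \<longleftrightarrow>
     (\<forall>v. L2 T v \<longrightarrow> L2 T (D v)) \<and>
     (\<forall>v1 v2 \<tau>. \<tau> \<in> {0..T} \<longrightarrow> (\<forall>t\<in>{0..\<tau>}. v1 t = v2 t) \<longrightarrow>
                 (\<forall>t\<in>{0..\<tau>}. D v1 t = D v2 t))"

definition satisfies_IQC :: "real \<Rightarrow> ((real \<Rightarrow> real^'nv) \<Rightarrow> (real \<Rightarrow> real^'nw))
                              \<Rightarrow> real^('nv + 'nw)^('nv + 'nw) \<Rightarrow> bool" where
  "satisfies_IQC T D M \<longleftrightarrow>
     (\<forall>v. L2 T v \<longrightarrow>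
        integral {0..T} (\<lambda>t. vcat (v t) (D v t) \<bullet> (M *v vcat (v t) (D v t))) \<ge> 0)"

text \<open>(xa, v, w, de) solves the equations of G_a with w = D(v), all in L2[0,T];
  the state equation is understood in the Caratheodory (integral) sense.\<close>
definition solves_Ga ::
  "real \<Rightarrow> (real \<Rightarrow> real^'nx^'nx) \<Rightarrow> (real \<Rightarrow> real^'nw^'nx) \<Rightarrow> (real \<Rightarrow> real^'nx^'nv)
   \<Rightarrow> (real \<Rightarrow> real^'nx^'ne) \<Rightarrow> (real \<Rightarrow> real^'nw^'nv) \<Rightarrow> (real \<Rightarrow> real^'nw^'ne)
   \<Rightarrow> (real \<Rightarrow> real^'nv) \<Rightarrow> ((real \<Rightarrow> real^'nv) \<Rightarrow> (real \<Rightarrow> real^'nw))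
   \<Rightarrow> (real \<Rightarrow> real^('nx + unit)) \<Rightarrow> (real \<Rightarrow> real^'nv) \<Rightarrow> (real \<Rightarrow> real^'nw)
   \<Rightarrow> (real \<Rightarrow> real^'ne) \<Rightarrow> bool" where
  "solves_Ga T A B Cv Ce Dvw Dew vbar D xa v w de \<longleftrightarrow>
     L2 T xa \<and> L2 T v \<and> L2 T w \<and> L2 T de \<and>
     (\<forall>t\<in>{0..T}.
        (\<lambda>s. A_aug (A s) *v xa s + B_aug (B s) *v w s) integrable_on {0..t} \<and>
        xa t = x0_aug + integral {0..t} (\<lambda>s. A_aug (A s) *v xa s + B_aug (B s) *v w s)) \<and>
     (\<forall>t\<in>{0..T}. v t = Cv_aug (Cv t) (vbar t) *v xa t + Dvw t *v w t) \<and>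
     (\<forall>t\<in>{0..T}. de t = Ce_aug (Ce t) *v xa t + Dew t *v w t) \<and>
     (\<forall>t\<in>{0..T}. w t = D v t)"

definition well_posed ::
  "real \<Rightarrow> (real \<Rightarrow> real^'nx^'nx) \<Rightarrow> (real \<Rightarrow> real^'nw^'nx) \<Rightarrow> (real \<Rightarrow> real^'nx^'nv)
   \<Rightarrow> (real \<Rightarrow> real^'nx^'ne) \<Rightarrow> (real \<Rightarrow> real^'nw^'nv) \<Rightarrow> (real \<Rightarrow> real^'nw^'ne)
   \<Rightarrow> (real \<Rightarrow> real^'nv) \<Rightarrow> ((real \<Rightarrow> real^'nv) \<Rightarrow> (real \<Rightarrow> real^'nw)) set \<Rightarrow> bool" where
  "well_posed T A B Cv Ce Dvw Dew vbar Ds \<longleftrightarrow>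
     (\<forall>D\<in>Ds.
        (\<exists>xa v w de. solves_Ga T A B Cv Ce Dvw Dew vbar D xa v w de) \<and>
        (\<forall>xa v w de xa' v' w' de'.
            solves_Ga T A B Cv Ce Dvw Dew vbar D xa v w de \<longrightarrow>
            solves_Ga T A B Cv Ce Dvw Dew vbar D xa' v' w' de' \<longrightarrow>
            L2_eq T xa xa' \<and> L2_eq T v v' \<and> L2_eq T w w' \<and> L2_eq T de de'))"

definition LMI_mat ::
  "real^'nx^'nx \<Rightarrow> real^'nw^'nx \<Rightarrow> real^'nx^'nv \<Rightarrow> real^'nx^'ne \<Rightarrow> real^'nw^'nv
   \<Rightarrow> real^'nw^'ne \<Rightarrow> real^'nv \<Rightarrow> real^('nx + unit)^('nx + unit)
   \<Rightarrow> real^('nx + unit)^('nx + unit) \<Rightarrow> nat \<Rightarrow> (nat \<Rightarrow> real)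
   \<Rightarrow> (nat \<Rightarrow> real^('nv + 'nw)^('nv + 'nw))
   \<Rightarrow> real^(('nx + unit) + 'nw)^(('nx + unit) + 'nw)" where
  "LMI_mat A B Cv Ce Dvw Dew vb P Pdot m lam M =
     (let Aa = A_aug A; Ba = B_aug B; Cva = Cv_aug Cv vb; Cea = Ce_aug Ce;
          Lv = blk Cva Dvw 0 (mat 1 :: real^'nw^'nw);
          Le = hcat Cea Dew
      in blk (Pdot + transpose Aa ** P + P ** Aa) (P ** Ba) (transpose Ba ** P) 0
         + transpose Le ** Le
         + (\<Sum>i<m. lam i *\<^sub>R (transpose Lv ** M i ** Lv)))"

end

theory Submission
  imports Defs
begin

(* Along a solution, the storage function V(t) = x_a(t)^T P(t) x_a(t) satisfies, by the LMI tested
   at the vector [x_a(t); w(t)], the dissipation inequality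
     V'(t) + |delta_e(t)|^2 + sum_i lambda_i q_i(t) <= 0,
   where q_i is the integrand of the i-th IQC. Integrating over [0,T] and using P(T) >= 0 and
   integral q_i >= 0 leaves the squared L2 norm of delta_e bounded by V(0) = x_a(0)^T P(0) x_a(0).
   The state is only an indefinite Henstock-Kurzweil integral of its right-hand side f, so V need
   not be differentiable; the integration is instead a gauge argument. On a small tagged interval
   [u,v] containing t, V(v) - V(u) exceeds (v - u) times the dissipation bound at t by at most
   eps (v - u) plus a multiple of |(v - u) f(t) - integral_u^v f|, and the Henstock lemma makes the
   sum of the latter small over a fine division. *)

lemma norm_matrix_vector_mult_le: "norm (A *v x) \<le> norm (A::real^'n^'m) * norm (x::real^'n)"
proof -
  have "norm (A *v x) = L2_set (\<lambda>i. \<bar>A $ i \<bullet> x\<bar>) UNIV"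
    by (simp add: norm_vec_def matrix_mult_dot)
  also have "\<dots> \<le> L2_set (\<lambda>i. norm (A $ i) * norm x) UNIV"
    by (intro L2_set_mono) (simp_all add: Cauchy_Schwarz_ineq2)
  also have "\<dots> = norm A * norm x"
    by (simp add: L2_set_left_distrib norm_vec_def)
  finally show ?thesis .
qed

lemma abs_inner_matrix_vector_le:
  fixes y :: "real^'m" and A :: "real^'n^'m" and z :: "real^'n"
  assumes "norm y \<le> Y" "norm A \<le> \<alpha>" "norm z \<le> Z"
  shows "\<bar>y \<bullet> (A *v z)\<bar> \<le> Y * \<alpha> * Z"
proof -
  have "\<bar>y \<bullet> (A *v z)\<bar> \<le> norm y * (norm A * norm z)"
    by (rule order_trans[OF Cauchy_Schwarz_ineq2]) (simp add: mult_left_mono norm_matrix_vector_mult_le)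
  also have "\<dots> \<le> Y * (\<alpha> * Z)"
  proof -
    have "0 \<le> Y" "0 \<le> \<alpha>"
      using assms(1,2) norm_ge_zero[of y] norm_ge_zero[of A] by linarith+
    then show ?thesis
      by (intro mult_mono assms mult_nonneg_nonneg norm_ge_zero)
  qed
  finally show ?thesis
    by (simp add: mult.assoc)
qed

lemma bounded_bilinear_matrix_vector_mult: "bounded_bilinear ((*v) :: real^'n^'m \<Rightarrow> real^'n \<Rightarrow> real^'m)"
proof
  show "\<exists>K. \<forall>A x. norm ((A::real^'n^'m) *v x) \<le> norm A * norm x * K"
    using norm_matrix_vector_mult_le by (metis mult_1_right)
qed (simp_all add: matrix_vector_mult_add_rdistrib matrix_vector_right_distrib
    scaleR_matrix_vector_assoc[symmetric] matrix_vector_mult_scaleR)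

lemma has_vector_derivative_straddle:
  fixes P :: "real \<Rightarrow> 'a::real_normed_vector"
  assumes "(P has_vector_derivative Q) (at t within S)" and "0 < \<eta>"
  obtains d where "0 < d"
    and "\<And>u v. u \<in> S \<Longrightarrow> v \<in> S \<Longrightarrow> u \<le> t \<Longrightarrow> t \<le> v \<Longrightarrow> v - u < d \<Longrightarrow>
      norm (P v - P u - (v - u) *\<^sub>R Q) \<le> \<eta> * (v - u)"
proof -
  obtain d where "0 < d" and d: "\<And>s. s \<in> S \<Longrightarrow> norm (s - t) < d \<Longrightarrow>
      norm (P s - P t - (s - t) *\<^sub>R Q) \<le> \<eta> * norm (s - t)"
    using assms unfolding has_vector_derivative_def has_derivative_within_alt by metis
  show thesis
  proof (rule that[OF \<open>0 < d\<close>])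
    fix u v
    assume "u \<in> S" "v \<in> S" "u \<le> t" "t \<le> v" "v - u < d"
    have "P v - P u - (v - u) *\<^sub>R Q = (P v - P t - (v - t) *\<^sub>R Q) - (P u - P t - (u - t) *\<^sub>R Q)"
      by (simp add: algebra_simps)
    also have "norm \<dots> \<le> norm (P v - P t - (v - t) *\<^sub>R Q) + norm (P u - P t - (u - t) *\<^sub>R Q)"
      by (rule norm_triangle_ineq4)
    also have "\<dots> \<le> \<eta> * (v - t) + \<eta> * (t - u)"
      using d[OF \<open>v \<in> S\<close>] d[OF \<open>u \<in> S\<close>] \<open>u \<le> t\<close> \<open>t \<le> v\<close> \<open>v - u < d\<close> by (intro add_mono) auto
    finally show "norm (P v - P u - (v - u) *\<^sub>R Q) \<le> \<eta> * (v - u)"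
      by (simp add: algebra_simps)
  qed
qed

lemma continuous_on_Times_straddle:
  fixes G :: "real \<times> real \<Rightarrow> real"
  assumes "continuous_on (S \<times> S) G" and "t \<in> S" and "0 < e"
  obtains d where "0 < d"
    and "\<And>u v. u \<in> S \<Longrightarrow> v \<in> S \<Longrightarrow> u \<le> t \<Longrightarrow> t \<le> v \<Longrightarrow> v - u < d \<Longrightarrow> G (u, v) < G (t, t) + e"
proof -
  obtain d where "0 < d" and d: "\<And>z. z \<in> S \<times> S \<Longrightarrow> dist z (t, t) < d \<Longrightarrow> dist (G z) (G (t, t)) < e"
    using assms unfolding continuous_on_iff by (metis SigmaI)
  show thesis
  proof (rule that[OF \<open>0 < d\<close>])
    fix u v
    assume "u \<in> S" "v \<in> S" "u \<le> t" "t \<le> v" "v - u < d"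
    have "dist (u, v) (t, t) \<le> \<bar>dist u t\<bar> + \<bar>dist v t\<bar>"
      unfolding dist_Pair_Pair by (rule sqrt_sum_squares_le_sum_abs)
    then have "dist (u, v) (t, t) < d"
      using \<open>u \<le> t\<close> \<open>t \<le> v\<close> \<open>v - u < d\<close> by (simp add: dist_real_def)
    then have "dist (G (u, v)) (G (t, t)) < e"
      using d \<open>u \<in> S\<close> \<open>v \<in> S\<close> by blast
    then show "G (u, v) < G (t, t) + e"
      using abs_ge_self[of "G (u, v) - G (t, t)"] by (simp add: dist_real_def)
  qed
qed

lemma increment_le_tagged_division_sum:
  fixes \<phi> g :: "real \<Rightarrow> real" and f :: "real \<Rightarrow> 'a::real_normed_vector"
  assumes "a \<le> b" and p: "p tagged_division_of {a..b}"
    and piece: "\<And>t u v. (t, {u..v}) \<in> p \<Longrightarrow> u \<le> v \<Longrightarrow>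
      \<phi> v - \<phi> u \<le> (v - u) * g t + \<epsilon> * (v - u) + C * norm ((v - u) *\<^sub>R f t - integral {u..v} f)"
  shows "\<phi> b - \<phi> a \<le> (\<Sum>(t,k)\<in>p. measure lborel k *\<^sub>R g t) + \<epsilon> * (b - a)
    + C * (\<Sum>(t,k)\<in>p. norm (measure lborel k *\<^sub>R f t - integral k f))"
proof -
  have "\<phi> (Sup k) - \<phi> (Inf k)
      \<le> measure lborel k * g t + \<epsilon> * measure lborel k + C * norm (measure lborel k *\<^sub>R f t - integral k f)"
    if tk: "(t, k) \<in> p" for t k
  proof -
    obtain u v where k: "k = {u..v}"
      using tagged_division_ofD(4)[OF p tk] by (metis box_real(2))
    have "u \<le> v"
      using tagged_division_ofD(2)[OF p tk] by (auto simp: k)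
    then show ?thesis
      using piece[of t u v] tk by (simp add: k)
  qed
  then have "(\<Sum>(t,k)\<in>p. \<phi> (Sup k) - \<phi> (Inf k))
      \<le> (\<Sum>(t,k)\<in>p. measure lborel k * g t + \<epsilon> * measure lborel k
          + C * norm (measure lborel k *\<^sub>R f t - integral k f))"
    by (intro sum_mono) auto
  moreover have "(\<Sum>(t,k)\<in>p. \<phi> (Sup k) - \<phi> (Inf k)) = \<phi> b - \<phi> a"
    using additive_tagged_division_1[OF \<open>a \<le> b\<close> p, of \<phi>] by simp
  moreover have "(\<Sum>(t,k)\<in>p. measure lborel k) = b - a"
    using additive_content_tagged_division[of p a b] p \<open>a \<le> b\<close> by (simp add: box_real(2))
  ultimately show ?thesis
    by (simp add: sum.distrib split_def flip: sum_distrib_left)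
qed

lemma increment_le_integral_of_local_bound:
  fixes \<phi> g :: "real \<Rightarrow> real" and f :: "real \<Rightarrow> 'a::euclidean_space"
  assumes "a \<le> b" and f: "f integrable_on {a..b}" and g: "g integrable_on {a..b}" and "0 \<le> C"
    and local: "\<And>t \<epsilon>. t \<in> {a..b} \<Longrightarrow> 0 < \<epsilon> \<Longrightarrow>
      \<exists>\<delta>>0. \<forall>u v. a \<le> u \<and> u \<le> t \<and> t \<le> v \<and> v \<le> b \<and> v - u < \<delta> \<longrightarrow>
        \<phi> v - \<phi> u \<le> (v - u) * g t + \<epsilon> * (v - u) + C * norm ((v - u) *\<^sub>R f t - integral {u..v} f)"
  shows "\<phi> b - \<phi> a \<le> integral {a..b} g"
proof (rule field_le_epsilon)
  fix e :: real
  assume "0 < e"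
  define \<epsilon> where "\<epsilon> = e / (1 + (b - a) + C)"
  have "0 < \<epsilon>" and e: "e = \<epsilon> * (1 + (b - a) + C)"
    using \<open>0 < e\<close> \<open>a \<le> b\<close> \<open>0 \<le> C\<close> by (simp_all add: \<epsilon>_def)
  define admissible where "admissible t d \<longleftrightarrow> (\<forall>u v. a \<le> u \<and> u \<le> t \<and> t \<le> v \<and> v \<le> b \<and> v - u < d \<longrightarrow>
      \<phi> v - \<phi> u \<le> (v - u) * g t + \<epsilon> * (v - u) + C * norm ((v - u) *\<^sub>R f t - integral {u..v} f))" for t d
  have "\<forall>t. \<exists>d. 0 < d \<and> (t \<in> {a..b} \<longrightarrow> admissible t d)"
    using local[OF _ \<open>0 < \<epsilon>\<close>] zero_less_one unfolding admissible_def by blast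
  then obtain \<delta> where \<delta>: "\<forall>t. 0 < \<delta> t \<and> (t \<in> {a..b} \<longrightarrow> admissible t (\<delta> t))"
    by (rule choice[THEN exE])
  have "f integrable_on cbox a b"
    using f by simp
  then obtain \<gamma>f where "gauge \<gamma>f" and Henstock: "\<And>p. p tagged_partial_division_of cbox a b \<Longrightarrow> \<gamma>f fine p \<Longrightarrow>
      (\<Sum>(t,k)\<in>p. norm (measure lborel k *\<^sub>R f t - integral k f)) < \<epsilon>"
    using \<open>0 < \<epsilon>\<close> by (rule Henstock_lemma) auto
  obtain \<gamma>g where "gauge \<gamma>g" and Riemann: "\<forall>p. p tagged_division_of {a..b} \<and> \<gamma>g fine p \<longrightarrow>
      norm ((\<Sum>(t,k)\<in>p. measure lborel k *\<^sub>R g t) - integral {a..b} g) < \<epsilon>"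
    using integrable_integral[OF g] \<open>0 < \<epsilon>\<close> unfolding has_integral_real by meson
  have "gauge (\<lambda>t. ball t (\<delta> t / 2) \<inter> \<gamma>f t \<inter> \<gamma>g t)"
    using \<open>gauge \<gamma>f\<close> \<open>gauge \<gamma>g\<close> \<delta> by (intro gauge_Int gauge_ball_dependent) auto
  then obtain p where p: "p tagged_division_of {a..b}" and "(\<lambda>t. ball t (\<delta> t / 2) \<inter> \<gamma>f t \<inter> \<gamma>g t) fine p"
    by (rule fine_division_exists_real)
  then have fine_\<delta>: "(\<lambda>t. ball t (\<delta> t / 2)) fine p" and "\<gamma>f fine p" and "\<gamma>g fine p"
    unfolding fine_Int by blast+
  have "\<phi> v - \<phi> u \<le> (v - u) * g t + \<epsilon> * (v - u) + C * norm ((v - u) *\<^sub>R f t - integral {u..v} f)"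
    if tk: "(t, {u..v}) \<in> p" and "u \<le> v" for t u v
  proof -
    have "t \<in> {u..v}" "{u..v} \<subseteq> {a..b}" and small: "{u..v} \<subseteq> ball t (\<delta> t / 2)"
      using tagged_division_ofD(2,3)[OF p tk] fineD[OF fine_\<delta> tk] by auto
    then have "a \<le> u" "u \<le> t" "t \<le> v" "v \<le> b" "v - u < \<delta> t"
      using small[THEN subsetD, of u] small[THEN subsetD, of v] by (auto simp: dist_real_def)
    then show ?thesis
      using \<delta> unfolding admissible_def by simp
  qed
  then have "\<phi> b - \<phi> a \<le> (\<Sum>(t,k)\<in>p. measure lborel k *\<^sub>R g t) + \<epsilon> * (b - a)
      + C * (\<Sum>(t,k)\<in>p. norm (measure lborel k *\<^sub>R f t - integral k f))"
    by (rule increment_le_tagged_division_sum[OF \<open>a \<le> b\<close> p])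
  moreover have "(\<Sum>(t,k)\<in>p. measure lborel k *\<^sub>R g t) \<le> integral {a..b} g + \<epsilon>"
    using Riemann[rule_format, OF conjI, OF p \<open>\<gamma>g fine p\<close>] by (simp add: abs_less_iff)
  moreover have "p tagged_partial_division_of cbox a b"
    using p by (simp add: tagged_division_of_def)
  then have "C * (\<Sum>(t,k)\<in>p. norm (measure lborel k *\<^sub>R f t - integral k f)) \<le> C * \<epsilon>"
    using Henstock \<open>\<gamma>f fine p\<close> \<open>0 \<le> C\<close> by (simp add: less_imp_le mult_left_mono)
  ultimately show "\<phi> b - \<phi> a \<le> integral {a..b} g + e"
    unfolding e by (simp add: algebra_simps)
qed

lemma quadratic_form_increment_decomposition:
  fixes b c F r :: "real^'n" and Pu Pv Q :: "real^'n^'n"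
  assumes "r = (c - b) - \<Delta> *\<^sub>R F"
  shows "c \<bullet> (Pv *v c) - b \<bullet> (Pu *v b) =
    b \<bullet> ((Pv - Pu - \<Delta> *\<^sub>R Q) *v b) + \<Delta> * (b \<bullet> (Q *v b) + b \<bullet> (Pv *v F) + F \<bullet> (Pv *v c))
    + r \<bullet> (Pv *v c) + b \<bullet> (Pv *v r)"
proof -
  have "c = b + \<Delta> *\<^sub>R F + r"
    using assms by simp
  then show ?thesis
    by (simp add: inner_add_left inner_add_right inner_diff_left inner_diff_right
        matrix_vector_mult_add_rdistrib matrix_vector_mult_diff_rdistrib matrix_vector_right_distrib
        matrix_vector_mult_scaleR scaleR_matrix_vector_assoc[symmetric] algebra_simps)
qed

lemma quadratic_form_increment_bound:
  fixes b c F :: "real^'n" and Pu Pv Q :: "real^'n^'n"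
  assumes "norm b \<le> Kx" "norm c \<le> Kx" "norm Pv \<le> KP" "norm (Pv - Pu - \<Delta> *\<^sub>R Q) \<le> \<eta> * \<Delta>"
  shows "c \<bullet> (Pv *v c) - b \<bullet> (Pu *v b)
    \<le> \<Delta> * (b \<bullet> (Q *v b) + b \<bullet> (Pv *v F) + F \<bullet> (Pv *v c)) + Kx\<^sup>2 * \<eta> * \<Delta>
      + 2 * Kx * KP * norm (\<Delta> *\<^sub>R F - (c - b))"
proof -
  define r where "r = (c - b) - \<Delta> *\<^sub>R F"
  have "\<bar>b \<bullet> ((Pv - Pu - \<Delta> *\<^sub>R Q) *v b)\<bar> \<le> Kx * (\<eta> * \<Delta>) * Kx"
    using assms by (intro abs_inner_matrix_vector_le)
  then have remainder: "b \<bullet> ((Pv - Pu - \<Delta> *\<^sub>R Q) *v b) \<le> Kx\<^sup>2 * \<eta> * \<Delta>"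
    by (simp add: abs_le_iff power2_eq_square mult_ac)
  have "\<bar>r \<bullet> (Pv *v c)\<bar> \<le> norm r * KP * Kx" "\<bar>b \<bullet> (Pv *v r)\<bar> \<le> Kx * KP * norm r"
    using assms by (auto intro: abs_inner_matrix_vector_le)
  moreover have "norm r = norm (\<Delta> *\<^sub>R F - (c - b))"
    unfolding r_def by (rule norm_minus_commute)
  ultimately have "r \<bullet> (Pv *v c) + b \<bullet> (Pv *v r) \<le> 2 * Kx * KP * norm (\<Delta> *\<^sub>R F - (c - b))"
    by (auto simp: abs_le_iff mult_ac)
  then show ?thesis
    using quadratic_form_increment_decomposition[OF r_def, of Pv Pu Q] remainder by linarith
qed

lemma quadratic_form_increment_local_bound:
  fixes x :: "real \<Rightarrow> real^'n" and P :: "real \<Rightarrow> real^'n^'n" and F :: "real^'n"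
  assumes x: "continuous_on {a..b} x" and P: "continuous_on {a..b} P"
    and P_deriv: "(P has_vector_derivative Q) (at t within {a..b})"
    and Kx: "\<And>s. s \<in> {a..b} \<Longrightarrow> norm (x s) \<le> Kx" and KP: "\<And>s. s \<in> {a..b} \<Longrightarrow> norm (P s) \<le> KP"
    and t: "t \<in> {a..b}" and "0 < \<epsilon>"
  shows "\<exists>\<delta>>0. \<forall>u v. a \<le> u \<and> u \<le> t \<and> t \<le> v \<and> v \<le> b \<and> v - u < \<delta> \<longrightarrow>
    x v \<bullet> (P v *v x v) - x u \<bullet> (P u *v x u)
      \<le> (v - u) * (x t \<bullet> (Q *v x t) + x t \<bullet> (P t *v F) + F \<bullet> (P t *v x t)) + \<epsilon> * (v - u)
        + 2 * Kx * KP * norm ((v - u) *\<^sub>R F - (x v - x u))"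
proof -
  \<comment> \<open>G (u, v) is the first-order coefficient in the increment bound; x only needs to make it continuous\<close>
  define G where "G z = x (fst z) \<bullet> (Q *v x (fst z)) + x (fst z) \<bullet> (P (snd z) *v F)
    + F \<bullet> (P (snd z) *v x (snd z))" for z :: "real \<times> real"
  have "continuous_on ({a..b} \<times> {a..b}) G"
  proof -
    note mult_cont = bounded_bilinear.continuous_on[OF bounded_bilinear_matrix_vector_mult]
    have "continuous_on ({a..b} \<times> {a..b}) (\<lambda>z. x (fst z))"
      "continuous_on ({a..b} \<times> {a..b}) (\<lambda>z. x (snd z))"
      "continuous_on ({a..b} \<times> {a..b}) (\<lambda>z. P (snd z))"
      by (auto intro!: continuous_on_compose2[OF x] continuous_on_compose2[OF P] continuous_intros)
    then show ?thesis
      unfolding G_def by (intro continuous_intros mult_cont)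
  qed
  then obtain d1 where "0 < d1" and d1: "\<And>u v. u \<in> {a..b} \<Longrightarrow> v \<in> {a..b} \<Longrightarrow> u \<le> t \<Longrightarrow> t \<le> v \<Longrightarrow>
      v - u < d1 \<Longrightarrow> G (u, v) < G (t, t) + \<epsilon> / 2"
    using t half_gt_zero[OF \<open>0 < \<epsilon>\<close>] by (rule continuous_on_Times_straddle) auto
  define \<eta> where "\<eta> = \<epsilon> / (2 * (Kx\<^sup>2 + 1))"
  have "0 < \<eta>" and \<eta>: "Kx\<^sup>2 * \<eta> \<le> \<epsilon> / 2"
    using \<open>0 < \<epsilon>\<close> by (simp_all add: \<eta>_def field_simps add_pos_nonneg)
  obtain d2 where "0 < d2" and d2: "\<And>u v. u \<in> {a..b} \<Longrightarrow> v \<in> {a..b} \<Longrightarrow> u \<le> t \<Longrightarrow> t \<le> v \<Longrightarrow>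
      v - u < d2 \<Longrightarrow> norm (P v - P u - (v - u) *\<^sub>R Q) \<le> \<eta> * (v - u)"
    using P_deriv \<open>0 < \<eta>\<close> by (rule has_vector_derivative_straddle) blast
  show ?thesis
  proof (intro exI[of _ "min d1 d2"] conjI allI impI)
    show "0 < min d1 d2"
      using \<open>0 < d1\<close> \<open>0 < d2\<close> by simp
  next
    fix u v
    assume "a \<le> u \<and> u \<le> t \<and> t \<le> v \<and> v \<le> b \<and> v - u < min d1 d2"
    then have u: "u \<in> {a..b}" and v: "v \<in> {a..b}" and "u \<le> t" "t \<le> v" "v - u < d1" "v - u < d2"
      using t by auto
    have "(v - u) * G (u, v) \<le> (v - u) * (G (t, t) + \<epsilon> / 2)"
      using d1[OF u v] \<open>u \<le> t\<close> \<open>t \<le> v\<close> \<open>v - u < d1\<close> by (intro mult_left_mono) auto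
    then have near: "(v - u) * G (u, v) \<le> (v - u) * G (t, t) + \<epsilon> * (v - u) / 2"
      by (simp add: algebra_simps)
    have "Kx\<^sup>2 * \<eta> * (v - u) \<le> \<epsilon> / 2 * (v - u)"
      using \<eta> \<open>u \<le> t\<close> \<open>t \<le> v\<close> by (intro mult_right_mono) auto
    then have small: "Kx\<^sup>2 * \<eta> * (v - u) \<le> \<epsilon> * (v - u) / 2"
      by simp
    have bound: "x v \<bullet> (P v *v x v) - x u \<bullet> (P u *v x u)
        \<le> (v - u) * G (u, v) + Kx\<^sup>2 * \<eta> * (v - u) + 2 * Kx * KP * norm ((v - u) *\<^sub>R F - (x v - x u))"
      unfolding G_def fst_conv snd_conv
      using Kx[OF u] Kx[OF v] KP[OF v] d2[OF u v] \<open>u \<le> t\<close> \<open>t \<le> v\<close> \<open>v - u < d2\<close>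
      by (intro quadratic_form_increment_bound) auto
    have at_t: "x t \<bullet> (Q *v x t) + x t \<bullet> (P t *v F) + F \<bullet> (P t *v x t) = G (t, t)"
      by (simp add: G_def)
    show "x v \<bullet> (P v *v x v) - x u \<bullet> (P u *v x u)
      \<le> (v - u) * (x t \<bullet> (Q *v x t) + x t \<bullet> (P t *v F) + F \<bullet> (P t *v x t)) + \<epsilon> * (v - u)
        + 2 * Kx * KP * norm ((v - u) *\<^sub>R F - (x v - x u))"
      unfolding at_t using bound near small by linarith
  qed
qed

lemma quadratic_form_increment_le_integral:
  fixes x f :: "real \<Rightarrow> real^'n" and P Pd :: "real \<Rightarrow> real^'n^'n" and g :: "real \<Rightarrow> real"
  assumes "a \<le> b" and f: "f integrable_on {a..b}"
    and x: "\<And>t. t \<in> {a..b} \<Longrightarrow> x t = x0 + integral {a..t} f"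
    and P: "\<And>t. t \<in> {a..b} \<Longrightarrow> (P has_vector_derivative Pd t) (at t within {a..b})"
    and g: "g integrable_on {a..b}"
    and bound: "\<And>t. t \<in> {a..b} \<Longrightarrow>
      x t \<bullet> (Pd t *v x t) + x t \<bullet> (P t *v f t) + f t \<bullet> (P t *v x t) \<le> g t"
  shows "x b \<bullet> (P b *v x b) - x a \<bullet> (P a *v x a) \<le> integral {a..b} g"
proof -
  have "continuous_on {a..b} (\<lambda>t. x0 + integral {a..t} f)"
    by (intro continuous_intros indefinite_integral_continuous_1 f)
  then have x_cont: "continuous_on {a..b} x"
    by (rule continuous_on_eq) (simp add: x)
  have P_cont: "continuous_on {a..b} P"
    using P has_vector_derivative_continuous continuous_on_eq_continuous_within by blast
  have x_increment: "integral {u..v} f = x v - x u" if "a \<le> u" "u \<le> v" "v \<le> b" for u v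
  proof -
    have "integral {a..u} f + integral {u..v} f = integral {a..v} f"
      using that
      by (intro Henstock_Kurzweil_Integration.integral_combine integrable_subinterval_real[OF f]) auto
    then show ?thesis
      using that x[of u] x[of v] by (simp add: eq_diff_eq add.commute)
  qed
  obtain Kx where Kx: "\<And>t. t \<in> {a..b} \<Longrightarrow> norm (x t) \<le> Kx" and "0 < Kx"
    using compact_imp_bounded[OF compact_continuous_image[OF x_cont compact_Icc]]
    by (metis bounded_pos imageI)
  obtain KP where KP: "\<And>t. t \<in> {a..b} \<Longrightarrow> norm (P t) \<le> KP" and "0 < KP"
    using compact_imp_bounded[OF compact_continuous_image[OF P_cont compact_Icc]]
    by (metis bounded_pos imageI)
  show ?thesis
  proof (rule increment_le_integral_of_local_bound[OF \<open>a \<le> b\<close> f g, where C = "2 * Kx * KP"])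
    show "0 \<le> 2 * Kx * KP"
      using \<open>0 < Kx\<close> \<open>0 < KP\<close> by simp
  next
    fix t \<epsilon> :: real
    assume t: "t \<in> {a..b}" and "0 < \<epsilon>"
    obtain \<delta> where "0 < \<delta>" and \<delta>: "\<And>u v. a \<le> u \<and> u \<le> t \<and> t \<le> v \<and> v \<le> b \<and> v - u < \<delta> \<Longrightarrow>
        x v \<bullet> (P v *v x v) - x u \<bullet> (P u *v x u)
          \<le> (v - u) * (x t \<bullet> (Pd t *v x t) + x t \<bullet> (P t *v f t) + f t \<bullet> (P t *v x t)) + \<epsilon> * (v - u)
            + 2 * Kx * KP * norm ((v - u) *\<^sub>R f t - (x v - x u))"
      using quadratic_form_increment_local_bound[OF x_cont P_cont P[OF t] Kx KP t \<open>0 < \<epsilon>\<close>] by blast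
    show "\<exists>\<delta>>0. \<forall>u v. a \<le> u \<and> u \<le> t \<and> t \<le> v \<and> v \<le> b \<and> v - u < \<delta> \<longrightarrow>
        x v \<bullet> (P v *v x v) - x u \<bullet> (P u *v x u)
          \<le> (v - u) * g t + \<epsilon> * (v - u) + 2 * Kx * KP * norm ((v - u) *\<^sub>R f t - integral {u..v} f)"
    proof (intro exI[of _ \<delta>] conjI allI impI)
      fix u v
      assume uv: "a \<le> u \<and> u \<le> t \<and> t \<le> v \<and> v \<le> b \<and> v - u < \<delta>"
      have "(v - u) * (x t \<bullet> (Pd t *v x t) + x t \<bullet> (P t *v f t) + f t \<bullet> (P t *v x t)) \<le> (v - u) * g t"
        using uv bound[OF t] by (intro mult_left_mono) auto
      then show "x v \<bullet> (P v *v x v) - x u \<bullet> (P u *v x u)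
          \<le> (v - u) * g t + \<epsilon> * (v - u) + 2 * Kx * KP * norm ((v - u) *\<^sub>R f t - integral {u..v} f)"
        using \<delta>[OF uv] uv x_increment[of u v] by simp
    qed (use \<open>0 < \<delta>\<close> in simp)
  qed
qed

lemma sum_UNIV_Plus:
  "(\<Sum>i\<in>(UNIV::('a::finite + 'b::finite) set). g i) = (\<Sum>a\<in>UNIV. g (Inl a)) + (\<Sum>b\<in>UNIV. g (Inr b))"
  by (metis UNIV_Plus_UNIV comp_apply finite sum.Plus sum.cong)

lemma blk_mult_vcat: "blk A B C D *v vcat x y = vcat (A *v x + B *v y) (C *v x + D *v y)"
  by (auto simp: vec_eq_iff blk_def vcat_def matrix_vector_mult_def sum_UNIV_Plus split: sum.splits)

lemma hcat_mult_vcat: "hcat A B *v vcat x y = A *v x + B *v y"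
  by (auto simp: vec_eq_iff hcat_def vcat_def matrix_vector_mult_def sum_UNIV_Plus)

lemma inner_vcat: "vcat x y \<bullet> vcat x' y' = x \<bullet> x' + y \<bullet> y'"
  by (simp add: inner_vec_def vcat_def sum_UNIV_Plus)

lemma norm_vcat_squared: "(norm (vcat x y))\<^sup>2 = (norm x)\<^sup>2 + (norm y)\<^sup>2"
  by (simp add: power2_norm_eq_inner inner_vcat)

lemma inner_vector_matrix_mult: "x \<bullet> (y v* A) = (A *v x) \<bullet> (y::real^'m)"
  by (metis dot_lmul_matrix inner_commute)

lemma sum_matrix_vector_mult: "(\<Sum>i\<in>I. N i) *v z = (\<Sum>i\<in>I. N i *v (z::real^'n))"
  by (induction I rule: infinite_finite_induct) (simp_all add: matrix_vector_mult_add_rdistrib)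

lemma LMI_mat_quadratic_form:
  fixes a :: "real^('nx::finite + unit)" and w :: "real^'nw"
  shows "vcat a w \<bullet> (LMI_mat A B Cv Ce Dvw Dew vb P Pd m lam M *v vcat a w) =
     a \<bullet> (Pd *v a) + a \<bullet> (P *v (A_aug A *v a + B_aug B *v w)) + (A_aug A *v a + B_aug B *v w) \<bullet> (P *v a)
     + (norm (Ce_aug Ce *v a + Dew *v w))\<^sup>2
     + (\<Sum>i<m. lam i * (vcat (Cv_aug Cv vb *v a + Dvw *v w) w \<bullet> (M i *v vcat (Cv_aug Cv vb *v a + Dvw *v w) w)))"
proof -
  let ?Aa = "A_aug A" and ?Ba = "B_aug B" and ?Cva = "Cv_aug Cv vb" and ?Cea = "Ce_aug Ce"
  let ?Lv = "blk ?Cva Dvw 0 (mat 1 :: real^'nw^'nw)" and ?Le = "hcat ?Cea Dew"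
  let ?z = "vcat a w"
  have storage: "?z \<bullet> (blk (Pd + transpose ?Aa ** P + P ** ?Aa) (P ** ?Ba) (transpose ?Ba ** P) 0 *v ?z)
      = a \<bullet> (Pd *v a) + a \<bullet> (P *v (?Aa *v a + ?Ba *v w)) + (?Aa *v a + ?Ba *v w) \<bullet> (P *v a)"
    by (simp add: blk_mult_vcat inner_vcat matrix_vector_mult_add_rdistrib
        matrix_vector_mul_assoc[symmetric] inner_vector_matrix_mult inner_add_left inner_add_right
        matrix_vector_right_distrib algebra_simps)
  have performance: "?z \<bullet> ((transpose ?Le ** ?Le) *v ?z) = (norm (?Cea *v a + Dew *v w))\<^sup>2"
    by (simp add: matrix_vector_mul_assoc[symmetric] inner_vector_matrix_mult hcat_mult_vcat power2_norm_eq_inner)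
  have multipliers: "?z \<bullet> ((\<Sum>i<m. lam i *\<^sub>R (transpose ?Lv ** M i ** ?Lv)) *v ?z)
      = (\<Sum>i<m. lam i * (vcat (?Cva *v a + Dvw *v w) w \<bullet> (M i *v vcat (?Cva *v a + Dvw *v w) w)))"
    by (simp add: sum_matrix_vector_mult inner_sum_right matrix_vector_mul_assoc[symmetric]
        scaleR_matrix_vector_assoc[symmetric] inner_vector_matrix_mult blk_mult_vcat matrix_vector_mult_0)
  show ?thesis
    unfolding LMI_mat_def Let_def
    by (simp only: matrix_vector_mult_add_rdistrib inner_add_right storage performance multipliers)
qed

lemma quadratic_form_vcat_integrable:
  fixes v :: "real \<Rightarrow> real^'a" and w :: "real \<Rightarrow> real^'b"
  assumes v: "L2 T v" and w: "L2 T w"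
  shows "(\<lambda>t. vcat (v t) (w t) \<bullet> (M *v vcat (v t) (w t))) integrable_on {0..T}" (is "?q integrable_on _")
proof (rule measurable_bounded_by_integrable_imp_integrable)
  have "v \<in> borel_measurable (lebesgue_on {0..T})" "w \<in> borel_measurable (lebesgue_on {0..T})"
    using v w unfolding L2_def by (simp_all add: measurable_on_iff_borel_measurable)
  moreover have "continuous_on UNIV (\<lambda>z::(real^'a) \<times> (real^'b). vcat (fst z) (snd z))"
    by (intro linear_continuous_on linear_conv_bounded_linear[THEN iffD1])
      (auto simp: linear_iff vcat_def vec_eq_iff split: sum.splits)
  then have "continuous_on UNIV (\<lambda>z. vcat (fst z) (snd z) \<bullet> (M *v vcat (fst z) (snd z)))"
    by (intro continuous_intros continuous_on_compose2[OF matrix_vector_mult_linear_continuous_on]) auto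
  ultimately show "?q \<in> borel_measurable (lebesgue_on {0..T})"
    by (rule borel_measurable_continuous_Pair)
  show "(\<lambda>t. norm M * ((norm (v t))\<^sup>2 + (norm (w t))\<^sup>2)) integrable_on {0..T}"
    using v w unfolding L2_def by (intro integrable_on_mult_right integrable_add) auto
  fix t
  have "norm (?q t) \<le> norm (vcat (v t) (w t)) * norm M * norm (vcat (v t) (w t))"
    using abs_inner_matrix_vector_le[OF order_refl order_refl order_refl] by simp
  also have "\<dots> = norm M * ((norm (v t))\<^sup>2 + (norm (w t))\<^sup>2)"
    using norm_vcat_squared[of "v t" "w t"] by (simp add: power2_eq_square mult_ac)
  finally show "norm (?q t) \<le> norm M * ((norm (v t))\<^sup>2 + (norm (w t))\<^sup>2)" .
qed simp

lemma neg_def_quadratic_form_le_zero: "neg_def M \<Longrightarrow> z \<bullet> (M *v z) \<le> 0"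
  unfolding neg_def_def by (cases "z = 0") (auto intro: less_imp_le)

lemma solves_Ga_dissipation_inequality:
  assumes sol: "solves_Ga T A B Cv Ce Dvw Dew vbar D xa v w de" and "0 \<le> T"
    and P: "\<And>t. t \<in> {0..T} \<Longrightarrow> (P has_vector_derivative Pd t) (at t within {0..T})"
    and LMI: "\<And>t. t \<in> {0..T} \<Longrightarrow>
      neg_def (LMI_mat (A t) (B t) (Cv t) (Ce t) (Dvw t) (Dew t) (vbar t) (P t) (Pd t) m lam M)"
  shows "xa T \<bullet> (P T *v xa T) - x0_aug \<bullet> (P 0 *v x0_aug)
    \<le> - (integral {0..T} (\<lambda>t. (norm (de t))\<^sup>2)
         + (\<Sum>i<m. lam i * integral {0..T} (\<lambda>t. vcat (v t) (w t) \<bullet> (M i *v vcat (v t) (w t)))))"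
proof -
  define f where "f s = A_aug (A s) *v xa s + B_aug (B s) *v w s" for s
  define q where "q i t = vcat (v t) (w t) \<bullet> (M i *v vcat (v t) (w t))" for i t
  note S = sol[unfolded solves_Ga_def]
  have f: "f integrable_on {0..T}" and x: "\<And>t. t \<in> {0..T} \<Longrightarrow> xa t = x0_aug + integral {0..t} f"
    using S \<open>0 \<le> T\<close> unfolding f_def by auto
  have "xa 0 = x0_aug"
    using x[of 0] \<open>0 \<le> T\<close> by simp
  have de: "(\<lambda>t. (norm (de t))\<^sup>2) integrable_on {0..T}"
    using S unfolding L2_def by blast
  have q: "q i integrable_on {0..T}" for i
    unfolding q_def using S by (intro quadratic_form_vcat_integrable) auto
  have sum_q: "(\<lambda>t. \<Sum>i<m. lam i * q i t) integrable_on {0..T}"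
    by (intro integrable_sum integrable_on_mult_right q) simp
  have bound: "xa t \<bullet> (Pd t *v xa t) + xa t \<bullet> (P t *v f t) + f t \<bullet> (P t *v xa t)
      \<le> - ((norm (de t))\<^sup>2 + (\<Sum>i<m. lam i * q i t))" if t: "t \<in> {0..T}" for t
  proof -
    have "vcat (xa t) (w t) \<bullet> (LMI_mat (A t) (B t) (Cv t) (Ce t) (Dvw t) (Dew t) (vbar t) (P t) (Pd t) m lam M
        *v vcat (xa t) (w t)) \<le> 0"
      using LMI[OF t] by (rule neg_def_quadratic_form_le_zero)
    then show ?thesis
      using S t unfolding LMI_mat_quadratic_form f_def q_def by simp
  qed
  have "xa T \<bullet> (P T *v xa T) - xa 0 \<bullet> (P 0 *v xa 0)
      \<le> integral {0..T} (\<lambda>t. - ((norm (de t))\<^sup>2 + (\<Sum>i<m. lam i * q i t)))"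
    using \<open>0 \<le> T\<close> f x P integrable_neg[OF integrable_add[OF de sum_q]] bound
    by (rule quadratic_form_increment_le_integral)
  also have "\<dots> = - (integral {0..T} (\<lambda>t. (norm (de t))\<^sup>2) + (\<Sum>i<m. lam i * integral {0..T} (q i)))"
    unfolding integral_neg integral_add[OF de sum_q]
    by (simp add: integral_sum integrable_on_mult_right q)
  finally show ?thesis
    using \<open>xa 0 = x0_aug\<close> by (simp add: q_def[abs_def])
qed

lemma solves_Ga_IQC_integral_nonneg:
  assumes "solves_Ga T A B Cv Ce Dvw Dew vbar D xa v w de" and "satisfies_IQC T D M"
  shows "0 \<le> integral {0..T} (\<lambda>t. vcat (v t) (w t) \<bullet> (M *v vcat (v t) (w t)))"
proof -
  have "L2 T v" and w: "\<forall>t\<in>{0..T}. w t = D v t"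
    using assms(1) unfolding solves_Ga_def by blast+
  then have "0 \<le> integral {0..T} (\<lambda>t. vcat (v t) (D v t) \<bullet> (M *v vcat (v t) (D v t)))"
    using assms(2) unfolding satisfies_IQC_def by blast
  also have "\<dots> = integral {0..T} (\<lambda>t. vcat (v t) (w t) \<bullet> (M *v vcat (v t) (w t)))"
    using w by (intro integral_cong) simp
  finally show ?thesis .
qed

theorem theorem1:
  fixes T :: real
    and A :: "real \<Rightarrow> real^'nx^'nx" and B :: "real \<Rightarrow> real^'nw^'nx"
    and Cv :: "real \<Rightarrow> real^'nx^'nv" and Ce :: "real \<Rightarrow> real^'nx^'ne"
    and Dvw :: "real \<Rightarrow> real^'nw^'nv" and Dew :: "real \<Rightarrow> real^'nw^'ne"
    and vbar :: "real \<Rightarrow> real^'nv"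
    and Ds :: "((real \<Rightarrow> real^'nv) \<Rightarrow> (real \<Rightarrow> real^'nw)) set"
    and m :: nat and M :: "nat \<Rightarrow> real^('nv + 'nw)^('nv + 'nw)"
    and lam :: "nat \<Rightarrow> real"
    and P :: "real \<Rightarrow> real^('nx + unit)^('nx + unit)"
  assumes T_pos: "0 < T"
    and causal: "\<forall>D\<in>Ds. causal_op T D"
    and wp: "well_posed T A B Cv Ce Dvw Dew vbar Ds"
    and M_sym: "\<forall>i<m. sym_mat (M i)"
    and IQCs: "\<forall>D\<in>Ds. \<forall>i<m. satisfies_IQC T D (M i)"
    and lam_nonneg: "\<forall>i<m. 0 \<le> lam i"
    and P_sym: "\<forall>t\<in>{0..T}. sym_mat (P t)"
    and P_diff: "\<forall>t\<in>{0..T}. P differentiable (at t within {0..T})"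
    and P_T: "psd (P T)"
    and LMI: "\<forall>t\<in>{0..T}. neg_def (LMI_mat (A t) (B t) (Cv t) (Ce t) (Dvw t) (Dew t) (vbar t)
                 (P t) (vector_derivative P (at t within {0..T})) m lam M)"
  shows "\<forall>D\<in>Ds. \<forall>xa v w de. solves_Ga T A B Cv Ce Dvw Dew vbar D xa v w de \<longrightarrow>
           L2_norm T de \<le> sqrt (x0_aug \<bullet> (P 0 *v x0_aug))"
proof (intro ballI allI impI)
  fix D xa v w de
  assume "D \<in> Ds" and sol: "solves_Ga T A B Cv Ce Dvw Dew vbar D xa v w de"
  have "xa T \<bullet> (P T *v xa T) - x0_aug \<bullet> (P 0 *v x0_aug)
    \<le> - (integral {0..T} (\<lambda>t. (norm (de t))\<^sup>2)
         + (\<Sum>i<m. lam i * integral {0..T} (\<lambda>t. vcat (v t) (w t) \<bullet> (M i *v vcat (v t) (w t)))))"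
    using sol T_pos P_diff LMI
    by (intro solves_Ga_dissipation_inequality) (auto simp: vector_derivative_works)
  moreover have "0 \<le> (\<Sum>i<m. lam i * integral {0..T} (\<lambda>t. vcat (v t) (w t) \<bullet> (M i *v vcat (v t) (w t))))"
    using IQCs lam_nonneg \<open>D \<in> Ds\<close> sol by (intro sum_nonneg mult_nonneg_nonneg solves_Ga_IQC_integral_nonneg) auto
  moreover have "0 \<le> xa T \<bullet> (P T *v xa T)"
    using P_T unfolding psd_def by blast
  ultimately have "integral {0..T} (\<lambda>t. (norm (de t))\<^sup>2) \<le> x0_aug \<bullet> (P 0 *v x0_aug)"
    by linarith
  then show "L2_norm T de \<le> sqrt (x0_aug \<bullet> (P 0 *v x0_aug))"
    unfolding L2_norm_def by (rule real_sqrt_le_mono)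
qed

end
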